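(* Let $w\ge 1$ and let $G$ be a graph of modular width at most $w$. Then every shortest path in $G$ has length at most $w$. Moreover, if $|V(G)|>w$ and $V_1,\dots,V_r$ ($r\le w$) is a modular decomposition of $G$, then every shortest path in $G$ of length at least three is either fully contained in some $G[V_i]$, or contains at most one vertex from each $V_i$, $i\in[r]$.
   Context: All graphs are finite, simple and undirected; the length of a path is its number of edges. A module of $G$ is a set $M\subseteq V(G)$ such that for all $u,v\in M$ and $x\in V(G)\setminus M$, $\{u,x\}\in E(G)$ implies $\{v,x\}\in E(G)$. A graph $G$ has modular width at most $w$ if either $|V(G)|\le w$, or there is a partition of $V(G)$ into at most $w$ sets $V_1,\dots,V_r$ such that each $V_i$ is a module of $G$ and each $G[V_i]$ has modular width at most $w$. A modular decomposition of $G$ (with respect to $w$) is a non-trivial partition of $V(G)$ into at most $w$ sets $V_1,\dots,V_r$, each a module of $G$ with $G[V_i]$ of modular width at most $w$. *)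

theory Defs
  imports Main
begin

text \<open>A finite simple undirected graph is given by a finite vertex set V and a
symmetric irreflexive adjacency relation E; only edges between vertices of V matter.
The induced subgraph G[S] for S \<subseteq> V is (S, E).\<close>

definition graph :: "'a set \<Rightarrow> ('a \<Rightarrow> 'a \<Rightarrow> bool) \<Rightarrow> bool" where
  "graph V E \<longleftrightarrow> finite V \<and> (\<forall>x y. E x y \<longrightarrow> E y x) \<and> (\<forall>x. \<not> E x x)"

definition is_module :: "'a set \<Rightarrow> ('a \<Rightarrow> 'a \<Rightarrow> bool) \<Rightarrow> 'a set \<Rightarrow> bool" where
  "is_module V E M \<longleftrightarrow> M \<subseteq> V \<and>
     (\<forall>u\<in>M. \<forall>v\<in>M. \<forall>x\<in>V - M. E u x \<longrightarrow> E v x)"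

definition is_partition :: "'a set set \<Rightarrow> 'a set \<Rightarrow> bool" where
  "is_partition P V \<longleftrightarrow> \<Union>P = V \<and> (\<forall>A\<in>P. A \<noteq> {}) \<and>
     (\<forall>A\<in>P. \<forall>B\<in>P. A \<noteq> B \<longrightarrow> A \<inter> B = {})"

inductive mw_le :: "nat \<Rightarrow> ('a \<Rightarrow> 'a \<Rightarrow> bool) \<Rightarrow> 'a set \<Rightarrow> bool"
  for w :: nat and E :: "'a \<Rightarrow> 'a \<Rightarrow> bool" where
  small: "finite V \<Longrightarrow> card V \<le> w \<Longrightarrow> mw_le w E V"
| decomp: "is_partition P V \<Longrightarrow> finite P \<Longrightarrow> card P \<le> w \<Longrightarrow>
     (\<forall>M\<in>P. is_module V E M \<and> mw_le w E M) \<Longrightarrow> mw_le w E V"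

definition modular_decomposition ::
  "nat \<Rightarrow> 'a set \<Rightarrow> ('a \<Rightarrow> 'a \<Rightarrow> bool) \<Rightarrow> 'a set set \<Rightarrow> bool" where
  "modular_decomposition w V E P \<longleftrightarrow> is_partition P V \<and> finite P \<and>
     2 \<le> card P \<and> card P \<le> w \<and> (\<forall>M\<in>P. is_module V E M \<and> mw_le w E M)"

definition is_path :: "'a set \<Rightarrow> ('a \<Rightarrow> 'a \<Rightarrow> bool) \<Rightarrow> 'a list \<Rightarrow> bool" where
  "is_path V E ps \<longleftrightarrow> ps \<noteq> [] \<and> distinct ps \<and> set ps \<subseteq> V \<and>
     (\<forall>i. Suc i < length ps \<longrightarrow> E (ps ! i) (ps ! Suc i))"

definition path_len :: "'a list \<Rightarrow> nat" where
  "path_len ps = length ps - 1"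

definition shortest_path :: "'a set \<Rightarrow> ('a \<Rightarrow> 'a \<Rightarrow> bool) \<Rightarrow> 'a list \<Rightarrow> bool" where
  "shortest_path V E ps \<longleftrightarrow> is_path V E ps \<and>
     (\<forall>qs. is_path V E qs \<and> hd qs = hd ps \<and> last qs = last ps \<longrightarrow> path_len ps \<le> path_len qs)"

end

theory Submission
  imports Defs
begin

text \<open>Shortest paths are induced. Suppose a shortest path of length at least three leaves a
module M and meets it in two vertices. At a place where the path leaves M, the outside vertex
is adjacent to every path vertex in M, so there are exactly two of them, on both sides of it.
The path continues beyond one of them to another vertex outside M, which by the same argument
is adjacent to both, and that gives a chord. Hence a shortest path not inside one part of a
modular decomposition meets each part at most once and so has at most w vertices; induction
along the definition of modular width bounds every shortest path by w.\<close>

lemma is_path_iff_successively: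
  "is_path V E ps \<longleftrightarrow> ps \<noteq> [] \<and> distinct ps \<and> set ps \<subseteq> V \<and> successively E ps"
  by (auto simp: is_path_def successively_conv_nth)

lemma successively_take: "successively P xs \<Longrightarrow> successively P (take n xs)"
  by (metis append_take_drop_id successively_append_iff)

lemma successively_drop: "successively P xs \<Longrightarrow> successively P (drop n xs)"
  by (metis append_take_drop_id successively_append_iff)

lemma path_len_eq_card: "is_path V E ps \<Longrightarrow> Suc (path_len ps) = card (set ps)"
  by (simp add: is_path_def path_len_def distinct_card)

lemma shortest_path_subset:
  assumes "shortest_path V E ps" "set ps \<subseteq> M" "M \<subseteq> V"
  shows "shortest_path M E ps"
  using assms by (auto simp: shortest_path_def is_path_def)

lemma shortest_path_no_forward_chord:
  assumes sp: "shortest_path V E ps" and ab: "Suc a < b" "b < length ps"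
  shows "\<not> E (ps ! a) (ps ! b)"
proof
  assume chord: "E (ps ! a) (ps ! b)"
  define qs where "qs = take (Suc a) ps @ drop b ps"
  have ps: "ps \<noteq> []" "distinct ps" "set ps \<subseteq> V" "successively E ps"
    using sp by (auto simp: shortest_path_def is_path_iff_successively)
  have "set (take (Suc a) ps) \<inter> set (drop b ps) = {}"
    using ps(2) ab by (intro set_take_disj_set_drop_if_distinct) auto
  moreover have "last (take (Suc a) ps) = ps ! a" "hd (drop b ps) = ps ! b"
    using ab by (simp_all add: take_Suc_conv_app_nth hd_drop_conv_nth)
  ultimately have "is_path V E qs"
    using ps ab chord set_take_subset[of "Suc a" ps] set_drop_subset[of b ps]
    by (auto simp: is_path_iff_successively qs_def successively_append_iff
        successively_take successively_drop)
  moreover have "hd qs = hd ps" "last qs = last ps"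
    using ab by (simp_all add: qs_def hd_append)
  ultimately have "path_len ps \<le> path_len qs"
    using sp by (simp add: shortest_path_def)
  then show False
    using ab by (simp add: qs_def path_len_def)
qed

lemma shortest_path_chordless:
  assumes "symp E" "shortest_path V E ps" "i < length ps" "j < length ps" "E (ps ! i) (ps ! j)"
  shows "i \<le> Suc j \<and> j \<le> Suc i"
proof -
  have "E (ps ! j) (ps ! i)" using assms(1,5) by (rule sympD)
  then show ?thesis
    using assms(2-5) shortest_path_no_forward_chord[of V E ps] not_less by blast
qed

text \<open>Since M is a module, b is adjacent to every path vertex in M; chordlessness then puts
all of them right next to b.\<close>

lemma shortest_path_module_around_exit:
  assumes "symp E" and sp: "shortest_path V E ps" and mod: "is_module V E M"
    and ab: "a < length ps" "b < length ps" "a = Suc b \<or> b = Suc a"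
    and in_out: "ps ! a \<in> M" "ps ! b \<notin> M"
    and i: "i < length ps" "ps ! i \<in> M"
  shows "Suc i = b \<or> i = Suc b"
proof -
  have path: "is_path V E ps" using sp by (simp add: shortest_path_def)
  then have "E (ps ! a) (ps ! b)"
    using ab \<open>symp E\<close> by (auto simp: is_path_def dest: sympD)
  moreover have "ps ! b \<in> V - M"
    using path ab in_out by (auto simp: is_path_def)
  ultimately have "E (ps ! i) (ps ! b)"
    using mod in_out i unfolding is_module_def by blast
  then have "i \<le> Suc b \<and> b \<le> Suc i"
    using shortest_path_chordless[OF \<open>symp E\<close> sp i(1) ab(2)] by blast
  moreover have "i \<noteq> b" using in_out i by auto
  ultimately show ?thesis by linarith
qed

lemma exists_change_below_max:
  fixes P :: "nat \<Rightarrow> bool"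
  assumes "P i" "\<not> P j"
  shows "\<exists>k < max i j. P (Suc k) \<noteq> P k"
proof (rule ccontr)
  assume "\<not> ?thesis"
  then have "P m = P 0" if "m \<le> max i j" for m
    using that by (induction m) auto
  then show False
    using assms by (metis max.cobounded1 max.cobounded2)
qed

lemma shortest_path_meets_module_at_most_once:
  assumes "symp E" and sp: "shortest_path V E ps" and len: "3 \<le> path_len ps"
    and mod: "is_module V E M" and not_inside: "\<not> set ps \<subseteq> M"
  shows "card (set ps \<inter> M) \<le> 1"
proof (rule ccontr)
  note around = shortest_path_module_around_exit[OF \<open>symp E\<close> sp mod]
  assume "\<not> card (set ps \<inter> M) \<le> 1"
  then obtain x y where "x \<in> set ps \<inter> M" "y \<in> set ps \<inter> M" "x \<noteq> y"
    by (auto simp: card_le_Suc0_iff_eq)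
  then obtain i j where ij: "i < j" "j < length ps" "ps ! i \<in> M" "ps ! j \<in> M"
    by (auto simp: in_set_conv_nth) (metis linorder_neqE_nat)
  obtain l where l: "l < length ps" "ps ! l \<notin> M"
    using not_inside by (metis in_set_conv_nth subsetI)
  obtain k where k: "k < max i l" "(ps ! Suc k \<in> M) \<noteq> (ps ! k \<in> M)"
    using exists_change_below_max[of "\<lambda>k. ps ! k \<in> M", OF ij(3) l(2)] by blast
  moreover have "Suc k < length ps"
    using k(1) ij l by (auto simp: less_max_iff_disj)
  ultimately obtain a b where ab: "a < length ps" "b < length ps" "a = Suc b \<or> b = Suc a"
      "ps ! a \<in> M" "ps ! b \<notin> M"
    by (metis Suc_lessD)
  have b: "Suc i = b" "j = Suc b"
    using around[OF ab, of i] around[OF ab, of j] ij by auto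
  \<comment> \<open>a vertex beyond the pair i, j; it exists because the path has at least four vertices\<close>
  obtain c where c: "c < length ps" "c = Suc j \<or> i = Suc c"
  proof (cases "Suc j < length ps")
    case False
    then have "i = Suc (i - 1)"
      using len b by (simp add: path_len_def)
    then show ?thesis
      using that[of "i - 1"] ij by linarith
  qed (use that in blast)
  have "ps ! c \<notin> M"
    using around[OF ab c(1)] b c(2) by auto
  then have "Suc i = c \<or> i = Suc c" "Suc j = c \<or> j = Suc c"
    using c ij around[of j c i] around[of j c j] around[of i c i] around[of i c j] by auto
  then show False
    using b c(2) by linarith
qed

lemma card_le_card_partition:
  assumes "S \<subseteq> \<Union>P" "finite P" "\<forall>M\<in>P. card (S \<inter> M) \<le> 1"
  shows "card S \<le> card P"
proof -
  have "(\<Union>M\<in>P. S \<inter> M) = S"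
    using assms(1) by blast
  then have "card S \<le> (\<Sum>M\<in>P. card (S \<inter> M))"
    using card_UN_le[OF assms(2), of "\<lambda>M. S \<inter> M"] by argo
  also have "\<dots> \<le> (\<Sum>M\<in>P. 1)"
    using assms(3) by (intro sum_mono) auto
  finally show ?thesis by simp
qed

lemma two_le_card_if_not_subset_part:
  assumes "S \<subseteq> \<Union>P" "finite P" "S \<noteq> {}" "\<not> (\<exists>M\<in>P. S \<subseteq> M)"
  shows "2 \<le> card P"
proof (rule ccontr)
  assume "\<not> 2 \<le> card P"
  then have "P = {} \<or> (\<exists>M. P = {M})"
    using assms(2) by (metis One_nat_def card_1_singletonE card_0_eq less_2_cases not_le)
  then show False using assms by auto
qed

lemma shortest_path_len_le_mw:
  assumes "mw_le w E V" "symp E" "shortest_path V E ps"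
  shows "path_len ps \<le> w"
  using assms
proof (induction arbitrary: ps rule: mw_le.induct)
  case (small V)
  then have "is_path V E ps" by (simp add: shortest_path_def)
  then show ?case
    using small card_mono[of V "set ps"] path_len_eq_card[of V E ps]
    by (auto simp: is_path_def)
next
  case (decomp P V)
  have path: "is_path V E ps" using decomp.prems by (simp add: shortest_path_def)
  have cover: "set ps \<subseteq> \<Union>P" "set ps \<noteq> {}"
    using path decomp.hyps(1) by (auto simp: is_path_def is_partition_def)
  show ?case
  proof (cases "\<exists>M\<in>P. set ps \<subseteq> M")
    case True
    then obtain M where "M \<in> P" "set ps \<subseteq> M" by blast
    moreover have "M \<subseteq> V" using \<open>M \<in> P\<close> decomp.IH by (simp add: is_module_def)
    ultimately show ?thesis
      using decomp.IH decomp.prems shortest_path_subset by blast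
  next
    case not_inside: False
    show ?thesis
    proof (cases "3 \<le> path_len ps")
      case True
      then have "\<forall>M\<in>P. card (set ps \<inter> M) \<le> 1"
        using shortest_path_meets_module_at_most_once[OF decomp.prems True] decomp.IH not_inside
        by blast
      then have "card (set ps) \<le> card P"
        using cover(1) decomp.hyps(2) by (intro card_le_card_partition)
      then show ?thesis
        using path_len_eq_card[OF path] decomp.hyps(3) by linarith
    next
      case False
      then show ?thesis
        using two_le_card_if_not_subset_part[OF cover(1) decomp.hyps(2) cover(2) not_inside]
          decomp.hyps(3) by linarith
    qed
  qed
qed

lemma graph_symp: "graph V E \<Longrightarrow> symp E"
  by (simp add: graph_def sympI)

theorem proposition27:
  fixes V :: "'a set" and E :: "'a \<Rightarrow> 'a \<Rightarrow> bool" and w :: nat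
  assumes "1 \<le> w" and "graph V E" and "mw_le w E V"
  shows "(\<forall>ps. shortest_path V E ps \<longrightarrow> path_len ps \<le> w) \<and>
         (w < card V \<longrightarrow>
           (\<forall>P. modular_decomposition w V E P \<longrightarrow>
             (\<forall>ps. shortest_path V E ps \<and> 3 \<le> path_len ps \<longrightarrow>
                (\<exists>M\<in>P. set ps \<subseteq> M) \<or> (\<forall>M\<in>P. card (set ps \<inter> M) \<le> 1))))"
proof (intro conjI allI impI)
  have "symp E" using assms(2) by (rule graph_symp)
  show "path_len ps \<le> w" if "shortest_path V E ps" for ps
    using shortest_path_len_le_mw[OF assms(3) \<open>symp E\<close> that] .
  show "(\<exists>M\<in>P. set ps \<subseteq> M) \<or> (\<forall>M\<in>P. card (set ps \<inter> M) \<le> 1)"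
    if "modular_decomposition w V E P" "shortest_path V E ps \<and> 3 \<le> path_len ps" for P ps
    using that shortest_path_meets_module_at_most_once[OF \<open>symp E\<close>]
    unfolding modular_decomposition_def by blast
qed

end
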